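(* For any positive integers $r,h,w,p$ there exists a positive integer $s=s(r,h,w,p)$ such that the following holds. Let $G$ be a graph with no subgraph isomorphic to $K_{r,r}$. For each $i\in[p]$ let $\mathcal C_i$ be a collection of pairwise disjoint subsets of $V(G)$, each of size at most $h$, with $|\mathcal C_i|\ge s$. Then for each $i\in[p]$ there exists $\mathcal C_i'\subseteq\mathcal C_i$ with $|\mathcal C_i'|=w$ such that for all $1\le i_1<i_2\le p$, every member of $\mathcal C_{i_1}'$ is disjoint from, and has no edge of $G$ to, every member of $\mathcal C_{i_2}'$.
   Context: Graphs are finite and simple; $[p]=\{1,\dots,p\}$. *)

theory Defs
  imports Main
begin

definition simple_graph :: "'a set \<Rightarrow> ('a \<Rightarrow> 'a \<Rightarrow> bool) \<Rightarrow> bool" where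
  "simple_graph V E \<longleftrightarrow> finite V \<and> (\<forall>u v. E u v \<longrightarrow> E v u) \<and> (\<forall>v. \<not> E v v)
     \<and> (\<forall>u v. E u v \<longrightarrow> u \<in> V \<and> v \<in> V)"

definition has_Krr_subgraph :: "'a set \<Rightarrow> ('a \<Rightarrow> 'a \<Rightarrow> bool) \<Rightarrow> nat \<Rightarrow> bool" where
  "has_Krr_subgraph V E r \<longleftrightarrow> (\<exists>A B. A \<subseteq> V \<and> B \<subseteq> V \<and> A \<inter> B = {} \<and>
     card A = r \<and> card B = r \<and> (\<forall>a\<in>A. \<forall>b\<in>B. E a b))"

definition separated :: "('a \<Rightarrow> 'a \<Rightarrow> bool) \<Rightarrow> 'a set \<Rightarrow> 'a set \<Rightarrow> bool" where
  "separated E X Y \<longleftrightarrow> X \<inter> Y = {} \<and> (\<forall>x\<in>X. \<forall>y\<in>Y. \<not> E x y)"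

end

theory Submission
  imports Defs "HOL-Library.FuncSet"
begin

text \<open>Two families \<open>A\<close>, \<open>B\<close> first. Fix \<open>h r + w\<close> members of \<open>A\<close>, with union \<open>U\<close>, and
  give each member \<open>Y\<close> of \<open>B\<close> the type formed by the traces on \<open>U\<close> of the closed
  neighbourhoods of the vertices of \<open>Y\<close>. By pigeonhole \<open>2 r + w\<close> members of \<open>B\<close> share one
  type. A set of that type with \<open>r\<close> vertices would be completely joined to \<open>r\<close> representatives,
  outside it, of these pairwise disjoint members, giving a K_{r,r}. So the type covers
  at most \<open>h r\<close> vertices, which meet at most \<open>h r\<close> of the fixed members of \<open>A\<close>; the other
  \<open>w\<close> are separated from the chosen members of \<open>B\<close>.
  Iterating this, one family is separated from \<open>k\<close> others at once by induction on \<open>k\<close>, and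
  then all families pairwise by induction on their number.\<close>

definition bounded_packing :: "'a set \<Rightarrow> nat \<Rightarrow> 'a set set \<Rightarrow> bool" where
  "bounded_packing V h A \<longleftrightarrow> (\<forall>X\<in>A. X \<subseteq> V \<and> card X \<le> h) \<and> pairwise disjnt A"

definition separated_families :: "('a \<Rightarrow> 'a \<Rightarrow> bool) \<Rightarrow> 'a set set \<Rightarrow> 'a set set \<Rightarrow> bool" where
  "separated_families E A B \<longleftrightarrow> (\<forall>X\<in>A. \<forall>Y\<in>B. separated E X Y)"

definition closed_nbhd_in :: "('a \<Rightarrow> 'a \<Rightarrow> bool) \<Rightarrow> 'a set \<Rightarrow> 'a \<Rightarrow> 'a set" where
  "closed_nbhd_in E U y = {u\<in>U. u = y \<or> E y u}"

lemma bounded_packing_subset: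
  "bounded_packing V h A \<Longrightarrow> A' \<subseteq> A \<Longrightarrow> bounded_packing V h A'"
  unfolding bounded_packing_def by (meson pairwise_subset subsetD)

lemma separated_families_subset:
  "separated_families E A B \<Longrightarrow> A' \<subseteq> A \<Longrightarrow> B' \<subseteq> B \<Longrightarrow> separated_families E A' B'"
  unfolding separated_families_def by blast

lemma separated_families_commute:
  assumes "\<And>u v. E u v \<Longrightarrow> E v u" and "separated_families E A B"
  shows "separated_families E B A"
  using assms unfolding separated_families_def separated_def by blast

lemma card_Union_le_card_mult:
  assumes "finite A" and "\<And>X. X \<in> A \<Longrightarrow> card X \<le> h"
  shows "card (\<Union>A) \<le> card A * h"
proof -
  have "card (\<Union>A) \<le> sum card A"
    by (rule card_Union_le_sum_card)
  also have "\<dots> \<le> card A * h"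
    using sum_bounded_above[of A card h] assms(2) by simp
  finally show ?thesis .
qed

lemma card_le_card_if_members_meet:
  assumes "pairwise disjnt A" and "finite S" and "\<And>X. X \<in> A \<Longrightarrow> X \<inter> S \<noteq> {}"
  shows "card A \<le> card S"
proof -
  define pick where "pick X = (SOME x. x \<in> X \<inter> S)" for X
  have pick: "pick X \<in> X \<inter> S" if "X \<in> A" for X
    unfolding pick_def by (rule someI_ex) (use assms(3)[OF that] in blast)
  have "inj_on pick A"
  proof (rule inj_onI)
    fix X Y assume "X \<in> A" "Y \<in> A" "pick X = pick Y"
    with pick have "\<not> disjnt X Y" unfolding disjnt_def by (metis IntD1 disjoint_iff)
    with assms(1) \<open>X \<in> A\<close> \<open>Y \<in> A\<close> show "X = Y" unfolding pairwise_def by blast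
  qed
  moreover have "pick ` A \<subseteq> S" using pick by blast
  ultimately show ?thesis using assms(2) by (rule card_inj_on_le)
qed

lemma card_members_avoiding:
  assumes "pairwise disjnt A" and "finite A" and "finite D"
  shows "card A \<le> card {X\<in>A. X \<inter> D = {}} + card D"
proof -
  have "card {X\<in>A. X \<inter> D \<noteq> {}} \<le> card D"
    using assms(1,3) by (intro card_le_card_if_members_meet) (auto intro: pairwise_subset)
  moreover have "card A = card {X\<in>A. X \<inter> D = {}} + card {X\<in>A. X \<inter> D \<noteq> {}}"
  proof -
    have "A = {X\<in>A. X \<inter> D = {}} \<union> {X\<in>A. X \<inter> D \<noteq> {}}" by auto
    then show ?thesis using assms(2) by (metis (no_types, lifting) card_Un_disjoint finite_Un disjoint_iff mem_Collect_eq)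
  qed
  ultimately show ?thesis by linarith
qed

lemma separated_if_closed_nbhds_avoid:
  assumes "\<And>u v. E u v \<Longrightarrow> E v u" and "X \<subseteq> U" and "\<And>y. y \<in> Y \<Longrightarrow> closed_nbhd_in E U y \<inter> X = {}"
  shows "separated E X Y"
  using assms unfolding separated_def closed_nbhd_in_def by blast

lemma homogeneous_subfamily:
  assumes "finite U" "card U \<le> n" "finite B" "2 ^ 2 ^ n * k \<le> card B"
  obtains B0 q where "B0 \<subseteq> B" "k \<le> card B0" "\<And>Y. Y \<in> B0 \<Longrightarrow> closed_nbhd_in E U ` Y = q"
proof -
  define type where "type Y = closed_nbhd_in E U ` Y" for Y
  have "type \<in> B \<rightarrow> Pow (Pow U)"
    unfolding type_def closed_nbhd_in_def by auto
  then obtain q where "card B \<le> card (type -` {q} \<inter> B) * card (Pow (Pow U))"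
    using pigeonhole_card[of type B "Pow (Pow U)"] assms(1,3) by auto
  moreover have "card (Pow (Pow U)) \<le> 2 ^ 2 ^ n"
    using assms(1,2) by (simp add: card_Pow)
  ultimately have "card (Pow (Pow U)) * k \<le> card (type -` {q} \<inter> B) * card (Pow (Pow U))"
    using assms(4) by (metis le_trans mult_le_mono1)
  then have "k \<le> card (type -` {q} \<inter> B)"
    using assms(1) by (simp add: card_Pow)
  with that[of "type -` {q} \<inter> B" q] show thesis
    by (auto simp: type_def)
qed

definition pair_bound :: "nat \<Rightarrow> nat \<Rightarrow> nat \<Rightarrow> nat" where
  "pair_bound h r w = 2 ^ 2 ^ ((h * r + w) * h) * (2 * r + w) + h * r + w"

fun separation_bound :: "nat \<Rightarrow> nat \<Rightarrow> nat \<Rightarrow> nat \<Rightarrow> nat" where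
  "separation_bound h r 0 w = w"
| "separation_bound h r (Suc p) w = (pair_bound h r ^^ p) (separation_bound h r p w)"

lemma pair_bound_pos: "r > 0 \<Longrightarrow> pair_bound h r w > 0"
  by (simp add: pair_bound_def)

lemma le_funpow_pair_bound: "w \<le> (pair_bound h r ^^ k) w"
  by (induction k) (auto simp: pair_bound_def)

lemma le_separation_bound: "w \<le> separation_bound h r p w"
  by (induction p) (auto intro: le_trans le_funpow_pair_bound)

locale Krr_free_graph =
  fixes V :: "'a set" and E :: "'a \<Rightarrow> 'a \<Rightarrow> bool" and r :: nat
  assumes graph: "simple_graph V E" and Krr_free: "\<not> has_Krr_subgraph V E r"
begin

lemma finite_V: "finite V"
  and sym_E: "E u v \<Longrightarrow> E v u"
  using graph unfolding simple_graph_def by blast+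

lemma r_pos: "r > 0"
proof (rule ccontr)
  assume "\<not> r > 0"
  then have "has_Krr_subgraph V E r"
    unfolding has_Krr_subgraph_def by (intro exI[of _ "{}"]) auto
  with Krr_free show False ..
qed

lemma card_lt_if_complete_to:
  assumes "R \<subseteq> V" "S \<subseteq> V" and adj: "\<And>y a. y \<in> R \<Longrightarrow> a \<in> S \<Longrightarrow> a \<noteq> y \<Longrightarrow> E y a"
    and "r \<le> card S"
  shows "card R < 2 * r"
proof (rule ccontr)
  assume "\<not> card R < 2 * r"
  obtain T where T: "T \<subseteq> S" "card T = r" "finite T"
    using obtain_subset_with_card_n[OF \<open>r \<le> card S\<close>] by blast
  have "card R - card T \<le> card (R - T)"
    using T(3) by (rule diff_card_le_card_Diff)
  with \<open>\<not> card R < 2 * r\<close> T(2) have "r \<le> card (R - T)" by linarith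
  then obtain B where B: "B \<subseteq> R - T" "card B = r"
    using obtain_subset_with_card_n by metis
  have "has_Krr_subgraph V E r"
    unfolding has_Krr_subgraph_def
  proof (intro exI conjI)
    show "\<forall>a\<in>T. \<forall>b\<in>B. E a b"
      using B T adj sym_E by blast
  qed (use assms T B in auto)
  with Krr_free show False ..
qed

lemma closed_nbhd_types_small:
  assumes B: "bounded_packing V h B" "2 * r \<le> card B" and "U \<subseteq> V"
    and type: "\<And>Y. Y \<in> B \<Longrightarrow> closed_nbhd_in E U ` Y = q" and "S \<in> q"
  shows "card S < r"
proof (rule ccontr)
  assume "\<not> card S < r"
  define R where "R = {y\<in>\<Union>B. closed_nbhd_in E U y = S}"
  have "B \<noteq> {}" using B(2) r_pos by auto
  then have "S \<subseteq> U" using type \<open>S \<in> q\<close> unfolding closed_nbhd_in_def by blast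
  have "R \<subseteq> V" using B(1) unfolding R_def bounded_packing_def by blast
  have "card B \<le> card R"
  proof (rule card_le_card_if_members_meet)
    show "pairwise disjnt B" using B(1) unfolding bounded_packing_def by blast
    show "finite R" using \<open>R \<subseteq> V\<close> finite_V by (rule finite_subset)
    show "Y \<inter> R \<noteq> {}" if "Y \<in> B" for Y
      using type[OF that] \<open>S \<in> q\<close> that unfolding R_def by blast
  qed
  moreover have "card R < 2 * r"
  proof (rule card_lt_if_complete_to)
    show "R \<subseteq> V" by fact
    show "S \<subseteq> V" using \<open>S \<subseteq> U\<close> \<open>U \<subseteq> V\<close> by blast
    show "E y a" if "y \<in> R" "a \<in> S" "a \<noteq> y" for y a
      using that unfolding R_def closed_nbhd_in_def by blast
  qed (use \<open>\<not> card S < r\<close> in simp)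
  ultimately show False using B(2) by simp
qed

lemma card_Union_closed_nbhd_type_le:
  assumes B: "bounded_packing V h B" "2 * r \<le> card B" and "U \<subseteq> V"
    and type: "\<And>Y. Y \<in> B \<Longrightarrow> closed_nbhd_in E U ` Y = q"
  shows "card (\<Union>q) \<le> h * r"
proof -
  obtain Y0 where "Y0 \<in> B" using B(2) r_pos by fastforce
  then have "Y0 \<subseteq> V" "card Y0 \<le> h" and q: "q = closed_nbhd_in E U ` Y0"
    using B(1) type unfolding bounded_packing_def by auto
  from \<open>Y0 \<subseteq> V\<close> have "finite Y0" using finite_V by (rule finite_subset)
  then have "finite q" "card q \<le> h"
    unfolding q using \<open>card Y0 \<le> h\<close> card_image_le le_trans by blast+
  moreover have "card S \<le> r" if "S \<in> q" for S
    using closed_nbhd_types_small[OF B \<open>U \<subseteq> V\<close> type that] by simp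
  ultimately have "card (\<Union>q) \<le> card q * r"
    by (intro card_Union_le_card_mult)
  with \<open>card q \<le> h\<close> show ?thesis by (meson le_trans mult_le_mono1)
qed

lemma separated_subfamilies:
  assumes A: "bounded_packing V h A" "pair_bound h r w \<le> card A"
    and B: "bounded_packing V h B" "pair_bound h r w \<le> card B"
  shows "\<exists>A'\<subseteq>A. \<exists>B'\<subseteq>B. card A' = w \<and> card B' = w \<and> separated_families E A' B'"
proof -
  define m where "m = h * r + w"
  obtain A0 where A0: "A0 \<subseteq> A" "card A0 = m" "finite A0"
    using obtain_subset_with_card_n[of m A] A(2) unfolding m_def pair_bound_def by auto
  define U where "U = \<Union>A0"
  have "U \<subseteq> V" using A(1) A0(1) unfolding U_def bounded_packing_def by blast
  then have "finite U" using finite_V by (rule finite_subset)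
  have "card U \<le> m * h"
    unfolding U_def using card_Union_le_card_mult[of A0 h] A(1) A0 unfolding bounded_packing_def by auto
  have "finite B" using B(2) pair_bound_pos[OF r_pos, of h w] by (intro card_ge_0_finite) linarith
  moreover have "2 ^ 2 ^ (m * h) * (2 * r + w) \<le> card B"
    using B(2) unfolding pair_bound_def m_def by simp
  ultimately obtain B0 q where B0: "B0 \<subseteq> B" "2 * r + w \<le> card B0"
    and type: "\<And>Y. Y \<in> B0 \<Longrightarrow> closed_nbhd_in E U ` Y = q"
    using homogeneous_subfamily[OF \<open>finite U\<close> \<open>card U \<le> m * h\<close>] by blast
  have "bounded_packing V h B0" using B(1) B0(1) by (rule bounded_packing_subset)
  then have "card (\<Union>q) \<le> h * r"
    using card_Union_closed_nbhd_type_le \<open>U \<subseteq> V\<close> type B0(2) by simp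
  define A1 where "A1 = {X\<in>A0. X \<inter> \<Union>q = {}}"
  have "\<Union>q \<subseteq> U"
  proof -
    obtain Y where "Y \<in> B0" using B0(2) r_pos by fastforce
    with type show ?thesis unfolding closed_nbhd_in_def by blast
  qed
  then have "card A0 \<le> card A1 + card (\<Union>q)"
    unfolding A1_def using A(1) A0 \<open>finite U\<close>
    by (intro card_members_avoiding) (auto simp: bounded_packing_def intro: pairwise_subset finite_subset)
  with \<open>card (\<Union>q) \<le> h * r\<close> A0(2) have "w \<le> card A1" unfolding m_def by linarith
  then obtain A' where A': "A' \<subseteq> A1" "card A' = w" using obtain_subset_with_card_n by metis
  obtain B' where B': "B' \<subseteq> B0" "card B' = w"
    using obtain_subset_with_card_n[of w B0] B0(2) by auto
  have "separated_families E A1 B0"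
    unfolding separated_families_def
  proof (intro ballI separated_if_closed_nbhds_avoid[OF sym_E])
    fix X Y assume "X \<in> A1" "Y \<in> B0"
    then show "X \<subseteq> U" unfolding A1_def U_def by blast
    fix y assume "y \<in> Y"
    with type[OF \<open>Y \<in> B0\<close>] \<open>X \<in> A1\<close> show "closed_nbhd_in E U y \<inter> X = {}"
      unfolding A1_def by blast
  qed
  then have "separated_families E A' B'" using A'(1) B'(1) by (rule separated_families_subset)
  moreover have "A' \<subseteq> A" "B' \<subseteq> B" using A' A0(1) B' B0(1) unfolding A1_def by auto
  ultimately show ?thesis using A'(2) B'(2) by blast
qed

lemma separated_from_one_family:
  assumes "finite I"
    and C: "\<And>i. i \<in> I \<Longrightarrow> bounded_packing V h (C i) \<and> (pair_bound h r ^^ card I) t \<le> card (C i)"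
    and N: "bounded_packing V h N" "(pair_bound h r ^^ card I) t \<le> card N"
  shows "\<exists>C' N'. (\<forall>i\<in>I. C' i \<subseteq> C i \<and> card (C' i) = t) \<and> N' \<subseteq> N \<and> card N' = t
           \<and> (\<forall>i\<in>I. separated_families E (C' i) N')"
  using assms
proof (induction I arbitrary: N rule: finite_induct)
  case empty
  then obtain N' where "N' \<subseteq> N" "card N' = t"
    using obtain_subset_with_card_n[of t N] by auto
  then show ?case by blast
next
  case (insert x I)
  define w where "w = (pair_bound h r ^^ card I) t"
  have bound: "(pair_bound h r ^^ card (insert x I)) t = pair_bound h r w"
    using insert.hyps unfolding w_def by simp
  obtain A1 N1 where A1: "A1 \<subseteq> C x" "card A1 = w" and N1: "N1 \<subseteq> N" "card N1 = w"
    and "separated_families E A1 N1"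
    using separated_subfamilies[of h "C x" w N] insert.prems bound by auto
  have "w \<le> pair_bound h r w" by (simp add: pair_bound_def)
  then have "\<And>i. i \<in> I \<Longrightarrow> bounded_packing V h (C i) \<and> w \<le> card (C i)"
    using insert.prems(1) bound by (metis insertCI le_trans)
  moreover have "bounded_packing V h N1" using insert.prems(2) N1(1) by (rule bounded_packing_subset)
  ultimately obtain C' N' where C': "\<forall>i\<in>I. C' i \<subseteq> C i \<and> card (C' i) = t"
    and N': "N' \<subseteq> N1" "card N' = t" and sep: "\<forall>i\<in>I. separated_families E (C' i) N'"
    using insert.IH[of N1] N1(2) unfolding w_def by auto
  obtain A2 where A2: "A2 \<subseteq> A1" "card A2 = t"
    using obtain_subset_with_card_n[of t A1] A1(2) le_funpow_pair_bound unfolding w_def by metis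
  have "separated_families E A2 N'"
    using \<open>separated_families E A1 N1\<close> A2(1) N'(1) by (rule separated_families_subset)
  then show ?case
    using C' sep A1(1) A2 N' N1(1) insert.hyps(2)
    by (intro exI[of _ "C'(x := A2)"] exI[of _ N']) auto
qed

lemma pairwise_separated_subfamilies:
  assumes "finite I"
    and "\<And>i. i \<in> I \<Longrightarrow> bounded_packing V h (C i) \<and> separation_bound h r (card I) w \<le> card (C i)"
  shows "\<exists>C'. (\<forall>i\<in>I. C' i \<subseteq> C i \<and> card (C' i) = w)
           \<and> (\<forall>i\<in>I. \<forall>j\<in>I. i \<noteq> j \<longrightarrow> separated_families E (C' i) (C' j))"
  using assms
proof (induction I arbitrary: C rule: finite_induct)
  case empty
  show ?case by blast
next
  case (insert x I)
  define t where "t = separation_bound h r (card I) w"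
  have "separation_bound h r (card (insert x I)) w = (pair_bound h r ^^ card I) t"
    using insert.hyps unfolding t_def by simp
  then obtain C' N' where C': "\<forall>i\<in>I. C' i \<subseteq> C i \<and> card (C' i) = t"
    and N': "N' \<subseteq> C x" "card N' = t" and sep: "\<forall>i\<in>I. separated_families E (C' i) N'"
    using separated_from_one_family[OF insert.hyps(1), where h = h and C = C and t = t and N = "C x"]
      insert.prems by auto
  have "bounded_packing V h (C' i) \<and> t \<le> card (C' i)" if "i \<in> I" for i
    using bounded_packing_subset C' insert.prems that by fastforce
  then obtain C'' where C'': "\<forall>i\<in>I. C'' i \<subseteq> C' i \<and> card (C'' i) = w"
    and sep'': "\<forall>i\<in>I. \<forall>j\<in>I. i \<noteq> j \<longrightarrow> separated_families E (C'' i) (C'' j)"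
    using insert.IH[of C'] unfolding t_def by blast
  obtain N'' where N'': "N'' \<subseteq> N'" "card N'' = w"
    using obtain_subset_with_card_n[of w N'] N'(2) le_separation_bound unfolding t_def by metis
  have to_N: "separated_families E (C'' i) N''" if "i \<in> I" for i
    using sep C'' N''(1) that separated_families_subset by blast
  then have from_N: "separated_families E N'' (C'' i)" if "i \<in> I" for i
    using that sym_E separated_families_commute by blast
  show ?case
  proof (intro exI[of _ "C''(x := N'')"] conjI ballI impI)
    fix i assume "i \<in> insert x I"
    then show "(C''(x := N'')) i \<subseteq> C i" "card ((C''(x := N'')) i) = w"
      using C' C'' N' N'' by (cases "i = x"; fastforce)+
  next
    fix i j assume "i \<in> insert x I" "j \<in> insert x I" "i \<noteq> j"
    then show "separated_families E ((C''(x := N'')) i) ((C''(x := N'')) j)"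
      using sep'' to_N from_N insert.hyps(2) by (cases "i = x"; cases "j = x") auto
  qed
qed

end

theorem mainTheorem10:
  fixes r h w p :: nat
  assumes "r > 0" "h > 0" "w > 0" "p > 0"
  shows "\<exists>s::nat. s > 0 \<and>
    (\<forall>(V::nat set) E (C :: nat \<Rightarrow> nat set set).
      simple_graph V E \<longrightarrow> \<not> has_Krr_subgraph V E r \<longrightarrow>
      (\<forall>i\<in>{1..p}. (\<forall>X\<in>C i. X \<subseteq> V \<and> card X \<le> h)
                  \<and> (\<forall>X\<in>C i. \<forall>Y\<in>C i. X \<noteq> Y \<longrightarrow> X \<inter> Y = {})
                  \<and> finite (C i) \<and> card (C i) \<ge> s) \<longrightarrow>
      (\<exists>C' :: nat \<Rightarrow> nat set set.
         (\<forall>i\<in>{1..p}. C' i \<subseteq> C i \<and> finite (C' i) \<and> card (C' i) = w) \<and>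
         (\<forall>i1\<in>{1..p}. \<forall>i2\<in>{1..p}. i1 < i2 \<longrightarrow>
            (\<forall>X\<in>C' i1. \<forall>Y\<in>C' i2. separated E X Y))))"
proof (rule exI[of _ "separation_bound h r p w"], intro conjI allI impI)
  show "separation_bound h r p w > 0"
    using le_separation_bound[of w h r p] \<open>w > 0\<close> by linarith
  fix V :: "nat set" and E C
  assume "simple_graph V E" "\<not> has_Krr_subgraph V E r"
  then interpret Krr_free_graph V E r by unfold_locales
  assume C: "\<forall>i\<in>{1..p}. (\<forall>X\<in>C i. X \<subseteq> V \<and> card X \<le> h)
                  \<and> (\<forall>X\<in>C i. \<forall>Y\<in>C i. X \<noteq> Y \<longrightarrow> X \<inter> Y = {})
                  \<and> finite (C i) \<and> card (C i) \<ge> separation_bound h r p w"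
  then have packings: "\<And>i. i \<in> {1..p} \<Longrightarrow>
      bounded_packing V h (C i) \<and> separation_bound h r (card {1..p}) w \<le> card (C i)"
    unfolding bounded_packing_def pairwise_def disjnt_def by simp
  obtain C' where C': "\<forall>i\<in>{1..p}. C' i \<subseteq> C i \<and> card (C' i) = w"
    and sep: "\<forall>i\<in>{1..p}. \<forall>j\<in>{1..p}. i \<noteq> j \<longrightarrow> separated_families E (C' i) (C' j)"
    using pairwise_separated_subfamilies[of "{1..p}" h C w] packings by auto
  have "finite (C' i)" if "i \<in> {1..p}" for i
    using C C' that finite_subset by (metis (no_types, lifting))
  with C' sep show "\<exists>C'. (\<forall>i\<in>{1..p}. C' i \<subseteq> C i \<and> finite (C' i) \<and> card (C' i) = w) \<and>
      (\<forall>i1\<in>{1..p}. \<forall>i2\<in>{1..p}. i1 < i2 \<longrightarrow> (\<forall>X\<in>C' i1. \<forall>Y\<in>C' i2. separated E X Y))"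
    unfolding separated_families_def by (intro exI[of _ C']) (simp add: less_imp_neq)
qed

end
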